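(* (i) Let $S$ be a unital nonassociative ring with multiplication $\circ$ which has a field $K$ as a subring and is a free left $K$-vector space of dimension $m$. Suppose that: (1) there is $t\in S$ such that $t^i$, $0\le i<m$, is a basis of $S$ over $K$, where $t^0=1$ and $t^{i+1}=t\circ t^i$; (2) for all $a\in K$, $a\neq0$, there is $a'\in K^\times$ such that $t\circ a=a'\circ t$; (3) for all $a,b,c\in K$, $i+j<m$, $k<m$, we have $[a\circ t^i,b\circ t^j,c\circ t^k]=0$; (4) $t^m=d$ for some $d\in K^\times$; (5) the map $\sigma:K\to K$, $\sigma(a)=a'$ (with $\sigma(0)=0$), has order $m$ and fixed field $F=\{a\in K\mid t\circ a=a\circ t\}$ containing a primitive $m$th root of unity $\omega$, and $K/F$ is a finite cyclic Galois extension. Then $S\cong S_f=(K/F,\sigma,d)$ with $f(t)=t^m-d\in K[t;\sigma]$. (ii) If moreover $S$ is a right division ring, then $f$ is irreducible and $S\cong(K/F,\sigma,d)$ is a nonassociative cyclic extension of $K$ of degree $m$.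
   Context: $[x,y,z]=(x\circ y)\circ z-x\circ(y\circ z)$ is the associator. $K[t;\sigma]$ is the twisted polynomial ring (polynomials $\sum a_it^i$, multiplication determined by $ta=\sigma(a)t$); $(K/F,\sigma,d)=S_f$ is the set of polynomials of degree $<m$ with multiplication $g\circ h=$ remainder of $gh$ on right division by $f=t^m-d$. A nonassociative ring $S\neq0$ is a right division ring if right multiplication $x\mapsto x\circ a$ is bijective for every $a\ne0$. $f$ is irreducible if not a unit and not a product of two non-units. Definition: if $A$ is a nonassociative division algebra and $D\subseteq A$ an associative division subalgebra, $A$ is a nonassociative cyclic extension of $D$ of degree $m$ if $A$ is a free left $D$-module of rank $m$ and $\mathrm{Aut}(A)$ has a cyclic subgroup $G$ of order $m$ with $H|_D=\mathrm{id}_D$ for all $H\in G$. *)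

theory Defs
  imports "HOL-Computational_Algebra.Polynomial"
begin

primrec tpow :: "('a \<Rightarrow> 'a \<Rightarrow> 'a) \<Rightarrow> 'a \<Rightarrow> 'a \<Rightarrow> nat \<Rightarrow> 'a" where
  "tpow mul one t 0 = one"
| "tpow mul one t (Suc i) = mul t (tpow mul one t i)"

definition associator :: "('a::ab_group_add \<Rightarrow> 'a \<Rightarrow> 'a) \<Rightarrow> 'a \<Rightarrow> 'a \<Rightarrow> 'a \<Rightarrow> 'a" where
  "associator mul x y z = mul (mul x y) z - mul x (mul y z)"

definition unital_nonassoc_ring :: "('a::ab_group_add \<Rightarrow> 'a \<Rightarrow> 'a) \<Rightarrow> 'a \<Rightarrow> bool" where
  "unital_nonassoc_ring mul one \<longleftrightarrow>
     (\<forall>x y z. mul (x + y) z = mul x z + mul y z) \<and>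
     (\<forall>x y z. mul x (y + z) = mul x y + mul x z) \<and>
     (\<forall>x. mul one x = x \<and> mul x one = x)"

definition right_division_ring :: "('a::ab_group_add \<Rightarrow> 'a \<Rightarrow> 'a) \<Rightarrow> bool" where
  "right_division_ring mul \<longleftrightarrow>
     (\<exists>x::'a. x \<noteq> 0) \<and> (\<forall>a. a \<noteq> 0 \<longrightarrow> bij (\<lambda>x. mul x a))"

definition galois_group :: "'k::field set \<Rightarrow> ('k \<Rightarrow> 'k) set" where
  "galois_group F = {\<tau>. bij \<tau> \<and> (\<forall>x y. \<tau> (x + y) = \<tau> x + \<tau> y \<and> \<tau> (x * y) = \<tau> x * \<tau> y)
                        \<and> (\<forall>x\<in>F. \<tau> x = x)}"

definition finite_cyclic_galois :: "'k::field set \<Rightarrow> bool" where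
  "finite_cyclic_galois F \<longleftrightarrow>
     (\<exists>B. finite B \<and> (\<forall>x::'k. \<exists>c. (\<forall>b\<in>B. c b \<in> F) \<and> x = (\<Sum>b\<in>B. c b * b))) \<and>
     {x. \<forall>\<tau>\<in>galois_group F. \<tau> x = x} = F \<and>
     (\<exists>g\<in>galois_group F. galois_group F = range (\<lambda>k. g ^^ k))"

text \<open>Multiplication in K[t;sigma]: (a t^i)(b t^j) = a sigma^i(b) t^(i+j).\<close>
definition skew_mult :: "('k::field \<Rightarrow> 'k) \<Rightarrow> 'k poly \<Rightarrow> 'k poly \<Rightarrow> 'k poly" where
  "skew_mult \<sigma> p q =
     (\<Sum>i\<le>degree p. \<Sum>j\<le>degree q. monom (coeff p i * (\<sigma> ^^ i) (coeff q j)) (i + j))"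

definition skew_rmod :: "('k::field \<Rightarrow> 'k) \<Rightarrow> 'k poly \<Rightarrow> 'k poly \<Rightarrow> 'k poly" where
  "skew_rmod \<sigma> g f =
     (THE r. (r = 0 \<or> degree r < degree f) \<and> (\<exists>q. g = skew_mult \<sigma> q f + r))"

definition Sf_carrier :: "'k::field poly \<Rightarrow> 'k poly set" where
  "Sf_carrier f = {g. g = 0 \<or> degree g < degree f}"

definition Sf_mult :: "('k::field \<Rightarrow> 'k) \<Rightarrow> 'k poly \<Rightarrow> 'k poly \<Rightarrow> 'k poly \<Rightarrow> 'k poly" where
  "Sf_mult \<sigma> f g h = skew_rmod \<sigma> (skew_mult \<sigma> g h) f"

definition skew_unit :: "('k::field \<Rightarrow> 'k) \<Rightarrow> 'k poly \<Rightarrow> bool" where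
  "skew_unit \<sigma> p \<longleftrightarrow> (\<exists>q. skew_mult \<sigma> p q = 1 \<and> skew_mult \<sigma> q p = 1)"

definition skew_irreducible :: "('k::field \<Rightarrow> 'k) \<Rightarrow> 'k poly \<Rightarrow> bool" where
  "skew_irreducible \<sigma> f \<longleftrightarrow>
     \<not> skew_unit \<sigma> f \<and>
     (\<forall>g h. f = skew_mult \<sigma> g h \<longrightarrow> skew_unit \<sigma> g \<or> skew_unit \<sigma> h)"

definition nonassoc_aut :: "'b::ab_group_add set \<Rightarrow> ('b \<Rightarrow> 'b \<Rightarrow> 'b) \<Rightarrow> ('b \<Rightarrow> 'b) \<Rightarrow> bool" where
  "nonassoc_aut A mul H \<longleftrightarrow> bij_betw H A A \<and>
     (\<forall>x\<in>A. \<forall>y\<in>A. H (x + y) = H x + H y \<and> H (mul x y) = mul (H x) (H y)) \<and>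
     (\<forall>x. x \<notin> A \<longrightarrow> H x = x)"

definition nonassoc_cyclic_ext ::
  "'b::ab_group_add set \<Rightarrow> ('b \<Rightarrow> 'b \<Rightarrow> 'b) \<Rightarrow> 'b \<Rightarrow> 'b set \<Rightarrow> nat \<Rightarrow> bool" where
  "nonassoc_cyclic_ext A mul one D m \<longleftrightarrow>
     \<comment> \<open>A is a nonassociative division algebra\<close>
     (\<exists>x\<in>A. x \<noteq> 0) \<and> one \<in> A \<and>
     (\<forall>a\<in>A. a \<noteq> 0 \<longrightarrow> bij_betw (\<lambda>x. mul a x) A A \<and> bij_betw (\<lambda>x. mul x a) A A) \<and>
     \<comment> \<open>D is an associative division subalgebra\<close>
     D \<subseteq> A \<and> 0 \<in> D \<and> one \<in> D \<and>
     (\<forall>x\<in>D. \<forall>y\<in>D. x + y \<in> D \<and> - x \<in> D \<and> mul x y \<in> D) \<and>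
     (\<forall>x\<in>D. \<forall>y\<in>D. \<forall>z\<in>D. mul (mul x y) z = mul x (mul y z)) \<and>
     (\<forall>x\<in>D. x \<noteq> 0 \<longrightarrow> (\<exists>y\<in>D. mul x y = one \<and> mul y x = one)) \<and>
     \<comment> \<open>A is a free left D-module of rank m\<close>
     (\<exists>b. (\<forall>i<m. b i \<in> A) \<and>
          (\<forall>x\<in>A. \<exists>c. (\<forall>i<m. c i \<in> D) \<and> x = (\<Sum>i<m. mul (c i) (b i))) \<and>
          (\<forall>c. (\<forall>i<m. c i \<in> D) \<and> (\<Sum>i<m. mul (c i) (b i)) = 0 \<longrightarrow> (\<forall>i<m. c i = 0))) \<and>
     \<comment> \<open>Aut(A) has a cyclic subgroup of order m fixing D pointwise\<close>
     (\<exists>g. nonassoc_aut A mul g \<and> card (range (\<lambda>k. g ^^ k)) = m \<and>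
          (\<forall>H\<in>range (\<lambda>k. g ^^ k). \<forall>x\<in>D. H x = x))"

end

theory Submission
  imports Defs
begin

text \<open>The coordinate map \<open>\<Sum> c\<^sub>i t\<^sup>i \<mapsto> \<Sum> c\<^sub>i \<circ> t\<^sup>i\<close> from polynomials of degree \<open>< m\<close> to \<open>S\<close>
  is an additive bijection. The vanishing associators let one compute
  \<open>(a t\<^sup>i)(b t\<^sup>j) = a \<sigma>\<^sup>i(b) t\<^sup>i\<^sup>+\<^sup>j\<close> and \<open>t\<^sup>m\<^sup>+\<^sup>r = \<sigma>\<^sup>r(d) t\<^sup>r\<close> in \<open>S\<close>, which is exactly the
  multiplication of \<open>S\<^sub>f\<close>, so the inverse of the coordinate map is an isomorphism onto \<open>S\<^sub>f\<close>.

  If \<open>S\<close> is a right division ring, so is \<open>S\<^sub>f\<close>. Since \<open>K\<close> lies in the right nucleus, left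
  multiplications are semilinear maps of a finite-dimensional \<open>K\<close>-space; being injective they are
  bijective, so \<open>S\<^sub>f\<close> is a division algebra. A factorization of \<open>f\<close> into factors of positive degree
  would give zero divisors in \<open>S\<^sub>f\<close>, hence \<open>f\<close> is irreducible. Finally, as \<open>\<sigma>(\<omega>) = \<omega>\<close> and
  \<open>\<omega>\<^sup>m = 1\<close>, the map \<open>t \<mapsto> \<omega> t\<close> is an automorphism of \<open>S\<^sub>f\<close> of order \<open>m\<close> fixing \<open>K\<close>.\<close>

lemma sum_eq_single:
  "finite A \<Longrightarrow> a \<in> A \<Longrightarrow> (\<And>i. i \<in> A \<Longrightarrow> i \<noteq> a \<Longrightarrow> g i = 0) \<Longrightarrow> sum g A = g a"
  by (subst sum.remove[of A a]) (auto intro!: sum.neutral)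

lemma coeff_sum_monom: "coeff (\<Sum>i<m. monom (c i) i) n = (if n < m then c n else 0)"
  by (simp add: coeff_sum coeff_monom)

lemma degree_sum_monom_less: "0 < m \<Longrightarrow> degree (\<Sum>k<m. monom (c k) k) < m"
  by (rule le_less_trans[OF degree_sum_le[of _ _ "m - 1"]])
    (auto intro: order.trans[OF degree_monom_le])

lemma poly_eq_sum_monom_coeff: "degree p < m \<Longrightarrow> p = (\<Sum>i<m. monom (coeff p i) i)"
  by (rule poly_eqI) (auto simp: coeff_sum_monom intro!: coeff_eq_0)

lemma poly_eq_if_coeff_eq_below:
  assumes "degree p < m" "degree q < m" "\<And>n. n < m \<Longrightarrow> coeff p n = coeff q n"
  shows "p = q"
proof (rule poly_eqI)
  fix n
  show "coeff p n = coeff q n"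
  proof (cases "n < m")
    case False
    with assms(1,2) show ?thesis by (simp add: coeff_eq_0)
  qed (use assms(3) in simp)
qed

lemma power_mod_period: "w ^ m = (1::'a::monoid_mult) \<Longrightarrow> w ^ k = w ^ (k mod m)"
  by (metis div_mult_mod_eq power_add power_mult power_one mult_1_left mult.commute)

section \<open>Injective linear maps on polynomials of bounded degree\<close>

lemma vector_space_poly_smult: "vector_space (smult :: 'k::field \<Rightarrow> 'k poly \<Rightarrow> 'k poly)"
  by unfold_locales (auto simp: smult_add_right smult_add_left)

lemma (in vector_space) linear_inj_on_span_imp_surj_on:
  assumes lin: "Vector_Spaces.linear scale scale T" and fin: "finite B"
    and into: "T ` span B \<subseteq> span B" and inj: "inj_on T (span B)"
  shows "T ` span B = span B"
proof -
  interpret T: Vector_Spaces.linear scale scale T by (fact lin)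
  obtain C where C: "C \<subseteq> span B" "independent C" "span B \<subseteq> span C"
    by (rule maximal_independent_subset)
  have span_C: "span C = span B"
    by (rule subset_antisym) (use span_mono[OF C(1)] C(3) in \<open>auto simp: span_span\<close>)
  have fin_C: "finite C"
    using independent_span_bound[OF fin C(2,1)] by simp
  have indep_TC: "independent (T ` C)"
    by (rule T.independent_injective_image[OF C(2)]) (simp add: span_C inj)
  have card_TC: "card (T ` C) = card C"
    using card_image[OF inj_on_subset[OF inj C(1)]] .
  have TC: "T ` C \<subseteq> span C"
    using into C(1) span_C by blast
  have "span C \<subseteq> span (T ` C)"
  proof
    fix y assume y: "y \<in> span C"
    show "y \<in> span (T ` C)"
    proof (rule ccontr)
      assume y_notin: "y \<notin> span (T ` C)"
      have "card (insert y (T ` C)) \<le> card C"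
        using independent_span_bound[OF fin_C independent_insertI[OF y_notin indep_TC]] y TC
        by blast
      moreover have "y \<notin> T ` C" using y_notin span_base by blast
      ultimately show False using card_TC fin_C by simp
    qed
  qed
  then have "span B \<subseteq> T ` span B"
    using T.span_image[of C] span_C by simp
  with into show ?thesis by (rule subset_antisym)
qed

lemma span_monoms_below:
  assumes "0 < m"
  shows "module.span smult ((\<lambda>i. monom (1::'k::field) i) ` {..<m}) = {p. degree p < m}"
    (is "module.span smult ?B = ?W")
proof -
  interpret vector_space "smult :: 'k \<Rightarrow> 'k poly \<Rightarrow> 'k poly" by (rule vector_space_poly_smult)
  have "?B \<subseteq> ?W" by (auto simp: degree_monom_eq)
  moreover have "?W \<subseteq> span ?B"
  proof
    fix p assume "p \<in> ?W"
    then have "p = (\<Sum>i<m. smult (coeff p i) (monom 1 i))"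
      using poly_eq_sum_monom_coeff[of p m] by (simp add: smult_monom)
    also have "\<dots> \<in> span ?B"
      by (intro span_sum span_scale span_base) auto
    finally show "p \<in> span ?B" .
  qed
  moreover have "subspace ?W"
    using assms by (auto simp: subspace_def intro: le_less_trans[OF degree_add_le_max])
  ultimately show ?thesis by (rule span_subspace)
qed

lemma linear_inj_on_degree_less_imp_surj:
  fixes T :: "'k::field poly \<Rightarrow> 'k poly"
  assumes add: "\<And>x y. T (x + y) = T x + T y"
    and scale: "\<And>c x. T (smult c x) = smult c (T x)"
    and into: "\<And>x. degree x < m \<Longrightarrow> degree (T x) < m"
    and inj: "inj_on T {p. degree p < m}" and m: "0 < m"
  shows "T ` {p. degree p < m} = {p. degree p < m}"
proof -
  interpret vector_space "smult :: 'k \<Rightarrow> 'k poly \<Rightarrow> 'k poly" by (rule vector_space_poly_smult)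
  have "Vector_Spaces.linear smult smult T"
    by unfold_locales (auto simp: add scale smult_add_right smult_add_left)
  then show ?thesis
    using linear_inj_on_span_imp_surj_on[of T "(\<lambda>i. monom 1 i) ` {..<m}"]
    unfolding span_monoms_below[OF m] using into inj by auto
qed

section \<open>The algebra \<open>S\<^sub>f\<close>\<close>

locale nonassoc_cyclic_algebra =
  fixes \<sigma> :: "'k::field \<Rightarrow> 'k" and d :: 'k and m :: nat
  assumes sigma_add: "\<And>x y. \<sigma> (x + y) = \<sigma> x + \<sigma> y"
    and sigma_mult: "\<And>x y. \<sigma> (x * y) = \<sigma> x * \<sigma> y"
    and sigma_period: "\<sigma> ^^ m = id"
    and m_pos: "0 < m"
    and d_nonzero: "d \<noteq> 0"
begin

lemma sigma_zero: "\<sigma> 0 = 0"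
  by (metis add.right_neutral add_left_cancel sigma_add)

lemma funpow_sigma_add: "(\<sigma> ^^ i) (x + y) = (\<sigma> ^^ i) x + (\<sigma> ^^ i) y"
  by (induction i) (simp_all add: sigma_add)

lemma funpow_sigma_mult: "(\<sigma> ^^ i) (x * y) = (\<sigma> ^^ i) x * (\<sigma> ^^ i) y"
  by (induction i) (simp_all add: sigma_mult)

lemma funpow_sigma_zero [simp]: "(\<sigma> ^^ i) 0 = 0"
  by (induction i) (simp_all add: sigma_zero)

lemma funpow_sigma_diff: "(\<sigma> ^^ i) (x - y) = (\<sigma> ^^ i) x - (\<sigma> ^^ i) y"
  by (metis add_diff_cancel_right' diff_add_cancel funpow_sigma_add)

lemma funpow_sigma_period: "(\<sigma> ^^ (m + r)) x = (\<sigma> ^^ r) x"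
  by (simp add: funpow_add sigma_period)

lemma funpow_sigma_complement:
  assumes "k \<le> m"
  shows "(\<sigma> ^^ (m - k)) ((\<sigma> ^^ k) x) = x" and "(\<sigma> ^^ k) ((\<sigma> ^^ (m - k)) x) = x"
  using assms sigma_period
  by (metis comp_apply funpow_add id_apply le_add_diff_inverse2,
      metis comp_apply funpow_add id_apply le_add_diff_inverse)

lemma inj_funpow_sigma: "inj (\<sigma> ^^ i)"
proof (rule inj_fn)
  show "inj \<sigma>"
    by (rule inj_on_inverseI[where g="\<sigma> ^^ (m - 1)"])
      (use funpow_sigma_complement(1)[of 1] m_pos in simp)
qed

lemma funpow_sigma_eq_0_iff: "(\<sigma> ^^ i) x = 0 \<longleftrightarrow> x = 0"
  using inj_funpow_sigma[of i] by (metis injD funpow_sigma_zero)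

lemma funpow_sigma_one [simp]: "(\<sigma> ^^ i) 1 = 1"
  using funpow_sigma_mult[of i 1 1] funpow_sigma_eq_0_iff[of i 1] by (metis mult_cancel_left1 one_neq_zero)

abbreviation fpoly :: "'k poly" where
  "fpoly \<equiv> monom 1 m - [:d:]"

lemma coeff_fpoly: "coeff fpoly j = (if j = m then 1 else 0) - (if j = 0 then d else 0)"
  by (auto simp: coeff_monom coeff_pCons')

lemma degree_fpoly: "degree fpoly = m"
proof (rule antisym)
  show "degree fpoly \<le> m" by (rule degree_le) (auto simp: coeff_fpoly coeff_pCons')
  show "m \<le> degree fpoly" by (rule le_degree) (use m_pos in \<open>simp add: coeff_fpoly coeff_pCons'\<close>)
qed

lemma fpoly_nonzero: "fpoly \<noteq> 0"
  using degree_fpoly m_pos by auto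

lemma Sf_carrier_fpoly: "Sf_carrier fpoly = {p. degree p < m}"
  unfolding Sf_carrier_def degree_fpoly using m_pos by auto

lemma skew_mult_eq_sum:
  assumes "degree p \<le> N" "degree q \<le> M"
  shows "skew_mult \<sigma> p q = (\<Sum>i\<le>N. \<Sum>j\<le>M. monom (coeff p i * (\<sigma> ^^ i) (coeff q j)) (i + j))"
proof -
  have "(\<Sum>j\<le>degree q. monom (coeff p i * (\<sigma> ^^ i) (coeff q j)) (i + j))
      = (\<Sum>j\<le>M. monom (coeff p i * (\<sigma> ^^ i) (coeff q j)) (i + j))" for i
    by (rule sum.mono_neutral_left) (auto simp: coeff_eq_0 assms)
  then have "skew_mult \<sigma> p q = (\<Sum>i\<le>degree p. \<Sum>j\<le>M. monom (coeff p i * (\<sigma> ^^ i) (coeff q j)) (i + j))"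
    by (simp add: skew_mult_def)
  also have "\<dots> = (\<Sum>i\<le>N. \<Sum>j\<le>M. monom (coeff p i * (\<sigma> ^^ i) (coeff q j)) (i + j))"
    by (rule sum.mono_neutral_left) (auto simp: coeff_eq_0 assms)
  finally show ?thesis .
qed

lemma skew_mult_0_left [simp]: "skew_mult \<sigma> 0 q = 0"
  and skew_mult_0_right [simp]: "skew_mult \<sigma> p 0 = 0"
  by (simp_all add: skew_mult_def)

lemma skew_mult_const: "skew_mult \<sigma> [:a:] [:b:] = [:a * b:]"
  using skew_mult_eq_sum[of "[:a:]" 0 "[:b:]" 0] by (simp add: monom_0)

lemma degree_skew_mult:
  assumes "p \<noteq> 0" "q \<noteq> 0"
  shows "degree (skew_mult \<sigma> p q) = degree p + degree q"
proof -
  let ?a = "degree p" and ?b = "degree q"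
  have coeff: "coeff (skew_mult \<sigma> p q) n =
      (\<Sum>i\<le>?a. \<Sum>j\<le>?b. if i + j = n then coeff p i * (\<sigma> ^^ i) (coeff q j) else 0)" for n
    by (simp add: skew_mult_eq_sum[OF order_refl order_refl] coeff_sum coeff_monom)
  have "coeff (skew_mult \<sigma> p q) (?a + ?b)
      = (\<Sum>i\<le>?a. \<Sum>j\<le>?b. if i = ?a then (if j = ?b then coeff p i * (\<sigma> ^^ i) (coeff q j) else 0) else 0)"
    unfolding coeff by (intro sum.cong refl) auto
  also have "\<dots> = coeff p ?a * (\<sigma> ^^ ?a) (coeff q ?b)"
    by (simp add: sum_eq_single[of _ ?a])
  also have "\<dots> \<noteq> 0" using assms by (simp add: funpow_sigma_eq_0_iff)
  finally have "coeff (skew_mult \<sigma> p q) (?a + ?b) \<noteq> 0" .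
  then show ?thesis
    by (intro antisym degree_le le_degree) (auto simp: coeff)
qed

lemma skew_mult_add_left: "skew_mult \<sigma> (p1 + p2) q = skew_mult \<sigma> p1 q + skew_mult \<sigma> p2 q"
proof -
  let ?N = "max (degree p1) (degree p2)"
  have "degree (p1 + p2) \<le> ?N" by (rule degree_add_le_max)
  then show ?thesis
    by (simp add: skew_mult_eq_sum[of _ ?N q "degree q"] distrib_right add_monom[symmetric] sum.distrib)
qed

lemma skew_mult_diff_left: "skew_mult \<sigma> (p1 - p2) q = skew_mult \<sigma> p1 q - skew_mult \<sigma> p2 q"
  using skew_mult_add_left[of "p1 - p2" p2 q] by (simp add: algebra_simps)

lemma skew_mult_sum_left: "skew_mult \<sigma> (\<Sum>k\<in>A. g k) q = (\<Sum>k\<in>A. skew_mult \<sigma> (g k) q)"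
  by (induction A rule: infinite_finite_induct) (simp_all add: skew_mult_add_left)

lemma skew_mult_monom_fpoly:
  "skew_mult \<sigma> (monom e r) fpoly = monom e (r + m) - monom (e * (\<sigma> ^^ r) d) r"
proof -
  have "skew_mult \<sigma> (monom e r) fpoly
      = (\<Sum>i\<le>r. \<Sum>j\<le>m. monom (coeff (monom e r) i * (\<sigma> ^^ i) (coeff fpoly j)) (i + j))"
    by (rule skew_mult_eq_sum) (simp_all add: degree_monom_le degree_fpoly)
  also have "\<dots> = (\<Sum>j\<le>m. monom (e * (\<sigma> ^^ r) (coeff fpoly j)) (r + j))"
    by (subst sum_eq_single[of _ r]) (auto simp: coeff_monom)
  also have "\<dots> = (\<Sum>j\<le>m. monom (e * (if j = m then 1 else 0)) (r + j)) -
                  (\<Sum>j\<le>m. monom (e * (if j = 0 then (\<sigma> ^^ r) d else 0)) (r + j))"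
    unfolding coeff_fpoly funpow_sigma_diff sum_subtractf[symmetric] right_diff_distrib
      diff_monom[symmetric]
    by (intro sum.cong refl) auto
  also have "(\<Sum>j\<le>m. monom (e * (if j = m then 1 else 0)) (r + j)) = monom e (r + m)"
    by (subst sum_eq_single[of _ m]) auto
  also have "(\<Sum>j\<le>m. monom (e * (if j = 0 then (\<sigma> ^^ r) d else 0)) (r + j))
      = monom (e * (\<sigma> ^^ r) d) r"
    by (subst sum_eq_single[of _ 0]) auto
  finally show ?thesis .
qed

lemma skew_rmod_fpoly_eqI:
  assumes r: "degree r < m" and g: "g = skew_mult \<sigma> q fpoly + r"
  shows "skew_rmod \<sigma> g fpoly = r"
  unfolding skew_rmod_def
proof (rule the_equality)
  show "(r = 0 \<or> degree r < degree fpoly) \<and> (\<exists>q. g = skew_mult \<sigma> q fpoly + r)"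
    using r g by (auto simp: degree_fpoly)
next
  fix r' assume "(r' = 0 \<or> degree r' < degree fpoly) \<and> (\<exists>q. g = skew_mult \<sigma> q fpoly + r')"
  then obtain q' where r': "degree r' < m" and g': "g = skew_mult \<sigma> q' fpoly + r'"
    using m_pos by (auto simp: degree_fpoly)
  have eq: "skew_mult \<sigma> (q - q') fpoly = r' - r"
    using g g' by (simp add: skew_mult_diff_left algebra_simps)
  have "degree (r' - r) < m"
    using degree_diff_le_max[of r' r] r r' by simp
  then have "q - q' = 0"
    using eq degree_skew_mult[of "q - q'" fpoly] fpoly_nonzero degree_fpoly by fastforce
  with eq show "r' = r" by simp
qed

text \<open>The product of \<open>a t\<^sup>i\<close> and \<open>b t\<^sup>j\<close> in \<open>S\<^sub>f\<close>: it is \<open>a \<sigma>\<^sup>i(b) t\<^sup>i\<^sup>+\<^sup>j\<close>, where \<open>t\<^sup>m\<^sup>+\<^sup>r\<close>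
  is replaced by \<open>\<sigma>\<^sup>r(d) t\<^sup>r\<close> since \<open>t\<^sup>r f = t\<^sup>m\<^sup>+\<^sup>r - \<sigma>\<^sup>r(d) t\<^sup>r\<close>.\<close>
definition monom_mult :: "'k \<Rightarrow> nat \<Rightarrow> 'k \<Rightarrow> nat \<Rightarrow> 'k poly" where
  "monom_mult a i b j =
     (if i + j < m then monom (a * (\<sigma> ^^ i) b) (i + j)
      else monom (a * (\<sigma> ^^ i) b * (\<sigma> ^^ (i + j - m)) d) (i + j - m))"

definition Sf_prod :: "'k poly \<Rightarrow> 'k poly \<Rightarrow> 'k poly" where
  "Sf_prod p q = (\<Sum>i<m. \<Sum>j<m. monom_mult (coeff p i) i (coeff q j) j)"

lemma degree_Sf_prod_less: "degree (Sf_prod p q) < m"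
proof -
  have "degree (monom_mult a i b j) \<le> m - 1" if "i < m" "j < m" for a b i j
    using that unfolding monom_mult_def by (auto intro: order.trans[OF degree_monom_le])
  then have "degree (Sf_prod p q) \<le> m - 1"
    unfolding Sf_prod_def by (auto intro!: degree_sum_le)
  then show ?thesis using m_pos by simp
qed

lemma monom_mult_add_right: "monom_mult a i (b + b') j = monom_mult a i b j + monom_mult a i b' j"
  by (simp add: monom_mult_def funpow_sigma_add distrib_right distrib_left add_monom)

lemma monom_mult_0_left [simp]: "monom_mult 0 i b j = 0"
  and monom_mult_0_right [simp]: "monom_mult a i 0 j = 0"
  by (simp_all add: monom_mult_def)

lemma Sf_prod_add_right: "Sf_prod p (q + q') = Sf_prod p q + Sf_prod p q'"
  by (simp add: Sf_prod_def monom_mult_add_right sum.distrib)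

lemma Sf_prod_0_left [simp]: "Sf_prod 0 q = 0"
  and Sf_prod_0_right [simp]: "Sf_prod p 0 = 0"
  by (simp_all add: Sf_prod_def)

lemma Sf_prod_diff_right: "Sf_prod p (q - q') = Sf_prod p q - Sf_prod p q'"
  using Sf_prod_add_right[of p "q - q'" q'] by (simp add: algebra_simps)

lemma Sf_prod_const_monom:
  assumes "i < m"
  shows "Sf_prod [:a:] (monom b i) = monom (a * b) i"
proof -
  have "Sf_prod [:a:] (monom b i) = (\<Sum>j<m. monom_mult a 0 (coeff (monom b i) j) j)"
    unfolding Sf_prod_def using m_pos by (subst sum_eq_single[of _ 0]) (auto simp: coeff_pCons')
  also have "\<dots> = monom_mult a 0 b i"
    using assms by (subst sum_eq_single[of _ i]) (auto simp: coeff_monom)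
  finally show ?thesis using assms by (simp add: monom_mult_def)
qed

lemma Sf_prod_const: "Sf_prod [:a:] [:b:] = [:a * b:]"
  using Sf_prod_const_monom[of 0 a b] m_pos by (simp add: monom_0)

definition right_scale :: "'k \<Rightarrow> 'k poly \<Rightarrow> 'k poly" where
  "right_scale c z = (\<Sum>k<m. monom (coeff z k * (\<sigma> ^^ k) c) k)"

lemma Sf_prod_const_right: "Sf_prod z [:c:] = right_scale c z"
  unfolding Sf_prod_def right_scale_def
  by (intro sum.cong refl, subst sum_eq_single[of _ 0])
    (use m_pos in \<open>auto simp: monom_mult_def coeff_pCons'\<close>)

lemma right_scale_add: "right_scale c (z + z') = right_scale c z + right_scale c z'"
  by (simp add: right_scale_def distrib_right add_monom[symmetric] sum.distrib)

lemma right_scale_0 [simp]: "right_scale c 0 = 0"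
  by (simp add: right_scale_def)

lemma right_scale_sum: "right_scale c (\<Sum>k\<in>A. g k) = (\<Sum>k\<in>A. right_scale c (g k))"
  by (induction A rule: infinite_finite_induct) (simp_all add: right_scale_add)

lemma right_scale_monom: "k < m \<Longrightarrow> right_scale c (monom e k) = monom (e * (\<sigma> ^^ k) c) k"
  unfolding right_scale_def by (subst sum_eq_single[of _ k]) (auto simp: coeff_monom)

lemma right_scale_monom_mult:
  assumes "i < m" "j < m"
  shows "right_scale c (monom_mult a i b j) = monom_mult a i (b * (\<sigma> ^^ j) c) j"
proof (cases "i + j < m")
  case True
  with assms show ?thesis
    by (simp add: monom_mult_def right_scale_monom funpow_sigma_mult funpow_add mult.assoc)
next
  case False
  then have "(\<sigma> ^^ (i + j)) c = (\<sigma> ^^ (i + j - m)) c"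
    using funpow_sigma_period[of "i + j - m" c] by simp
  with False assms show ?thesis
    by (simp add: monom_mult_def right_scale_monom funpow_sigma_mult funpow_add algebra_simps)
qed

lemma Sf_prod_assoc_const_right: "Sf_prod a (Sf_prod x [:c:]) = Sf_prod (Sf_prod a x) [:c:]"
proof -
  have "Sf_prod (Sf_prod a x) [:c:]
      = (\<Sum>i<m. \<Sum>j<m. right_scale c (monom_mult (coeff a i) i (coeff x j) j))"
    by (simp only: Sf_prod_const_right) (simp add: Sf_prod_def right_scale_sum)
  also have "\<dots> = (\<Sum>i<m. \<Sum>j<m. monom_mult (coeff a i) i (coeff x j * (\<sigma> ^^ j) c) j)"
    by (intro sum.cong refl) (simp add: right_scale_monom_mult)
  also have "\<dots> = Sf_prod a (Sf_prod x [:c:])"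
    by (simp only: Sf_prod_const_right, unfold Sf_prod_def, intro sum.cong refl)
      (simp add: right_scale_def coeff_sum_monom)
  finally show ?thesis by simp
qed

lemma skew_mult_eq_Sf_prod_mod_fpoly:
  assumes "degree p < m" "degree q < m"
  shows "\<exists>s. skew_mult \<sigma> p q = skew_mult \<sigma> s fpoly + Sf_prod p q"
proof
  let ?s = "\<Sum>i<m. \<Sum>j<m. if i + j < m then 0
              else monom (coeff p i * (\<sigma> ^^ i) (coeff q j)) (i + j - m)"
  have "skew_mult \<sigma> p q = (\<Sum>i\<le>m - 1. \<Sum>j\<le>m - 1. monom (coeff p i * (\<sigma> ^^ i) (coeff q j)) (i + j))"
    using assms by (intro skew_mult_eq_sum) auto
  also have "\<dots> = (\<Sum>i<m. \<Sum>j<m. monom (coeff p i * (\<sigma> ^^ i) (coeff q j)) (i + j))"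
    using m_pos by (simp add: atMost_atLeast0 atLeastLessThanSuc_atLeastAtMost[symmetric] lessThan_atLeast0)
  also have "\<dots> = (\<Sum>i<m. \<Sum>j<m. (if i + j < m then 0
              else skew_mult \<sigma> (monom (coeff p i * (\<sigma> ^^ i) (coeff q j)) (i + j - m)) fpoly)
              + monom_mult (coeff p i) i (coeff q j) j)"
    by (intro sum.cong refl) (simp add: skew_mult_monom_fpoly monom_mult_def)
  also have "\<dots> = skew_mult \<sigma> ?s fpoly + Sf_prod p q"
    unfolding Sf_prod_def skew_mult_sum_left sum.distrib
    by (intro arg_cong2[where f="(+)"] sum.cong refl) auto
  finally show "skew_mult \<sigma> p q = skew_mult \<sigma> ?s fpoly + Sf_prod p q" .
qed

lemma Sf_mult_eq_Sf_prod:
  assumes "degree p < m" "degree q < m"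
  shows "Sf_mult \<sigma> fpoly p q = Sf_prod p q"
proof -
  obtain s where "skew_mult \<sigma> p q = skew_mult \<sigma> s fpoly + Sf_prod p q"
    using skew_mult_eq_Sf_prod_mod_fpoly[OF assms] ..
  then show ?thesis
    unfolding Sf_mult_def by (rule skew_rmod_fpoly_eqI[OF degree_Sf_prod_less])
qed

subsection \<open>Division and irreducibility\<close>

text \<open>\<open>sigma_twist\<close> turns scalar multiplication into right multiplication by constants, so
  that the right \<open>K\<close>-linear left multiplications of \<open>S\<^sub>f\<close> become \<open>K\<close>-linear after conjugation.\<close>
definition sigma_twist :: "'k poly \<Rightarrow> 'k poly" where
  "sigma_twist u = (\<Sum>j<m. monom ((\<sigma> ^^ j) (coeff u j)) j)"

definition sigma_untwist :: "'k poly \<Rightarrow> 'k poly" where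
  "sigma_untwist v = (\<Sum>k<m. monom ((\<sigma> ^^ (m - k)) (coeff v k)) k)"

lemma coeff_sigma_twist: "coeff (sigma_twist u) n = (if n < m then (\<sigma> ^^ n) (coeff u n) else 0)"
  by (simp add: sigma_twist_def coeff_sum_monom)

lemma coeff_sigma_untwist:
  "coeff (sigma_untwist v) n = (if n < m then (\<sigma> ^^ (m - n)) (coeff v n) else 0)"
  by (simp add: sigma_untwist_def coeff_sum_monom)

lemma degree_sigma_twist_less: "degree (sigma_twist u) < m"
  unfolding sigma_twist_def using m_pos by (rule degree_sum_monom_less)

lemma degree_sigma_untwist_less: "degree (sigma_untwist v) < m"
  unfolding sigma_untwist_def using m_pos by (rule degree_sum_monom_less)

lemma sigma_twist_untwist: "degree v < m \<Longrightarrow> sigma_twist (sigma_untwist v) = v"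
  by (rule poly_eq_if_coeff_eq_below)
    (auto simp: degree_sigma_twist_less coeff_sigma_twist coeff_sigma_untwist funpow_sigma_complement)

lemma sigma_untwist_twist: "degree u < m \<Longrightarrow> sigma_untwist (sigma_twist u) = u"
  by (rule poly_eq_if_coeff_eq_below)
    (auto simp: degree_sigma_untwist_less coeff_sigma_twist coeff_sigma_untwist funpow_sigma_complement)

lemma sigma_twist_add: "sigma_twist (u + u') = sigma_twist u + sigma_twist u'"
  by (rule poly_eqI) (simp add: coeff_sigma_twist funpow_sigma_add)

lemma sigma_untwist_add: "sigma_untwist (v + v') = sigma_untwist v + sigma_untwist v'"
  by (rule poly_eqI) (simp add: coeff_sigma_untwist funpow_sigma_add)

lemma sigma_twist_smult: "sigma_twist (smult c u) = Sf_prod (sigma_twist u) [:c:]"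
  unfolding Sf_prod_const_right
  by (rule poly_eqI)
    (simp add: coeff_sigma_twist right_scale_def coeff_sum_monom funpow_sigma_mult mult.commute)

lemma sigma_untwist_right_scale: "sigma_untwist (right_scale c v) = smult c (sigma_untwist v)"
  by (rule poly_eqI)
    (simp add: coeff_sigma_untwist right_scale_def coeff_sum_monom funpow_sigma_mult
      funpow_sigma_complement)

text \<open>Surjectivity of left multiplication is where finite dimensionality enters.\<close>
lemma bij_betw_Sf_prod_left:
  assumes right_inj: "\<And>h. degree h < m \<Longrightarrow> h \<noteq> 0 \<Longrightarrow> inj_on (\<lambda>x. Sf_prod x h) {p. degree p < m}"
    and a: "degree a < m" "a \<noteq> 0"
  shows "bij_betw (Sf_prod a) {p. degree p < m} {p. degree p < m}"
proof -
  let ?V = "{p :: 'k poly. degree p < m}"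
  have inj: "inj_on (Sf_prod a) ?V"
  proof (rule inj_onI)
    fix x y assume x: "x \<in> ?V" and y: "y \<in> ?V" and eq: "Sf_prod a x = Sf_prod a y"
    show "x = y"
    proof (rule ccontr)
      assume "x \<noteq> y"
      moreover have "degree (x - y) < m"
        using x y degree_diff_le_max[of x y] by simp
      moreover have "Sf_prod a (x - y) = Sf_prod 0 (x - y)"
        using eq by (simp add: Sf_prod_diff_right)
      ultimately show False
        using inj_onD[OF right_inj[of "x - y"], of a 0] a m_pos by simp
    qed
  qed
  define T where "T u = sigma_untwist (Sf_prod a (sigma_twist u))" for u
  have twist_T: "sigma_twist (T u) = Sf_prod a (sigma_twist u)" for u
    by (simp add: T_def sigma_twist_untwist degree_Sf_prod_less)
  have "T ` ?V = ?V"
  proof (rule linear_inj_on_degree_less_imp_surj)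
    show "T (x + y) = T x + T y" for x y
      by (simp add: T_def sigma_twist_add Sf_prod_add_right sigma_untwist_add)
    show "T (smult c x) = smult c (T x)" for c x
      unfolding T_def sigma_twist_smult Sf_prod_assoc_const_right
      by (simp only: Sf_prod_const_right sigma_untwist_right_scale)
    show "inj_on T ?V"
    proof (rule inj_onI)
      fix x y assume "x \<in> ?V" "y \<in> ?V" "T x = T y"
      then have "Sf_prod a (sigma_twist x) = Sf_prod a (sigma_twist y)"
        by (simp flip: twist_T)
      then have "sigma_untwist (sigma_twist x) = sigma_untwist (sigma_twist y)"
        using inj degree_sigma_twist_less by (auto dest: inj_onD)
      with \<open>x \<in> ?V\<close> \<open>y \<in> ?V\<close> show "x = y" by (simp add: sigma_untwist_twist)
    qed
  qed (simp_all add: T_def degree_sigma_untwist_less m_pos)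
  have "Sf_prod a ` ?V = ?V"
  proof
    show "Sf_prod a ` ?V \<subseteq> ?V" using degree_Sf_prod_less by auto
    show "?V \<subseteq> Sf_prod a ` ?V"
    proof
      fix y assume y: "y \<in> ?V"
      have "sigma_untwist y \<in> T ` ?V"
        using \<open>T ` ?V = ?V\<close> degree_sigma_untwist_less by simp
      then obtain u where "T u = sigma_untwist y" by (metis imageE)
      then have "Sf_prod a (sigma_twist u) = y"
        using y by (simp flip: twist_T add: sigma_twist_untwist)
      then show "y \<in> Sf_prod a ` ?V" using degree_sigma_twist_less by blast
    qed
  qed
  with inj show ?thesis by (simp add: bij_betw_def)
qed

lemma skew_unit_const: "c \<noteq> 0 \<Longrightarrow> skew_unit \<sigma> [:c:]"
  unfolding skew_unit_def by (rule exI[of _ "[:inverse c:]"]) (simp add: skew_mult_const one_pCons)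

lemma skew_irreducible_fpoly:
  assumes right_inj: "\<And>h. degree h < m \<Longrightarrow> h \<noteq> 0 \<Longrightarrow> inj_on (\<lambda>x. Sf_prod x h) {p. degree p < m}"
  shows "skew_irreducible \<sigma> fpoly"
  unfolding skew_irreducible_def
proof (intro conjI allI impI)
  show "\<not> skew_unit \<sigma> fpoly"
  proof
    assume "skew_unit \<sigma> fpoly"
    then obtain q where q: "skew_mult \<sigma> fpoly q = 1" unfolding skew_unit_def by blast
    then have "q \<noteq> 0" by auto
    then have "degree (skew_mult \<sigma> fpoly q) = m + degree q"
      using degree_skew_mult fpoly_nonzero degree_fpoly by simp
    with q m_pos show False by simp
  qed
next
  fix g h assume f: "fpoly = skew_mult \<sigma> g h"
  have "g \<noteq> 0" "h \<noteq> 0" using f fpoly_nonzero by auto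
  have deg: "degree g + degree h = m"
    using degree_skew_mult[OF \<open>g \<noteq> 0\<close> \<open>h \<noteq> 0\<close>] f degree_fpoly by simp
  consider "degree g = 0" | "degree h = 0" | "degree g < m" "degree h < m"
    using deg by linarith
  then show "skew_unit \<sigma> g \<or> skew_unit \<sigma> h"
  proof cases
    case 1
    then obtain c where "g = [:c:]" by (rule degree_eq_zeroE)
    with \<open>g \<noteq> 0\<close> show ?thesis by (simp add: skew_unit_const)
  next
    case 2
    then obtain c where "h = [:c:]" by (rule degree_eq_zeroE)
    with \<open>h \<noteq> 0\<close> show ?thesis by (simp add: skew_unit_const)
  next
    case 3
    have "skew_mult \<sigma> 1 fpoly = fpoly"
      using skew_mult_monom_fpoly[of 1 0] by (simp add: monom_0 one_pCons)
    then have "skew_rmod \<sigma> fpoly fpoly = 0"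
      using m_pos by (intro skew_rmod_fpoly_eqI[where q=1]) auto
    then have "Sf_prod g h = Sf_prod 0 h"
      using Sf_mult_eq_Sf_prod[OF 3] f by (simp add: Sf_mult_def)
    then have "g = 0"
      using inj_onD[OF right_inj[OF 3(2) \<open>h \<noteq> 0\<close>], of g 0] 3 m_pos by simp
    with \<open>g \<noteq> 0\<close> show ?thesis by simp
  qed
qed

subsection \<open>The automorphism \<open>t \<mapsto> \<omega> t\<close>\<close>

definition root_scale :: "'k \<Rightarrow> 'k poly \<Rightarrow> 'k poly" where
  "root_scale w p = (\<Sum>k<m. monom (w ^ k * coeff p k) k)"

lemma coeff_root_scale: "coeff (root_scale w p) n = (if n < m then w ^ n * coeff p n else 0)"
  by (simp add: root_scale_def coeff_sum_monom)

lemma degree_root_scale_less: "degree (root_scale w p) < m"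
  unfolding root_scale_def using m_pos by (rule degree_sum_monom_less)

lemma root_scale_add: "root_scale w (x + y) = root_scale w x + root_scale w y"
  by (rule poly_eqI) (simp add: coeff_root_scale distrib_left)

lemma root_scale_sum: "root_scale w (\<Sum>k\<in>A. g k) = (\<Sum>k\<in>A. root_scale w (g k))"
  by (rule poly_eqI) (simp add: coeff_root_scale coeff_sum sum_distrib_left)

lemma root_scale_monom: "k < m \<Longrightarrow> root_scale w (monom e k) = monom (w ^ k * e) k"
  by (rule poly_eqI) (simp add: coeff_root_scale coeff_monom)

lemma root_scale_root_scale: "root_scale a (root_scale b p) = root_scale (a * b) p"
  by (rule poly_eqI) (simp add: coeff_root_scale power_mult_distrib mult.assoc)

lemma root_scale_1: "degree p < m \<Longrightarrow> root_scale 1 p = p"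
  by (rule poly_eq_if_coeff_eq_below) (auto simp: coeff_root_scale degree_root_scale_less)

lemma root_scale_monom_mult:
  assumes w: "\<sigma> w = w" "w ^ m = 1" and ij: "i < m" "j < m"
  shows "root_scale w (monom_mult a i b j) = monom_mult (w ^ i * a) i (w ^ j * b) j"
proof -
  have fixed: "(\<sigma> ^^ i) (w ^ j) = w ^ j" for i j
  proof -
    have "(\<sigma> ^^ i) w = w" by (induction i) (simp_all add: w(1))
    then show ?thesis by (induction j) (simp_all add: funpow_sigma_mult)
  qed
  show ?thesis
  proof (cases "i + j < m")
    case True
    with ij show ?thesis
      by (simp add: monom_mult_def root_scale_monom funpow_sigma_mult fixed power_add algebra_simps)
  next
    case False
    then have "w ^ (i + j) = w ^ (i + j - m)"
      using w(2) by (metis le_add_diff_inverse not_less power_add mult_1_left)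
    with False ij show ?thesis
      by (simp add: monom_mult_def root_scale_monom funpow_sigma_mult fixed power_add algebra_simps)
  qed
qed

lemma root_scale_Sf_prod:
  assumes "\<sigma> w = w" "w ^ m = 1"
  shows "root_scale w (Sf_prod x y) = Sf_prod (root_scale w x) (root_scale w y)"
  unfolding Sf_prod_def root_scale_sum
  by (intro sum.cong refl) (simp add: root_scale_monom_mult[OF assms] coeff_root_scale)

text \<open>Extended by the identity outside \<open>S\<^sub>f\<close>, as required by \<^const>\<open>nonassoc_aut\<close>.\<close>
definition root_aut :: "'k \<Rightarrow> 'k poly \<Rightarrow> 'k poly" where
  "root_aut w p = (if degree p < m then root_scale w p else p)"

lemma funpow_root_aut: "(root_aut w ^^ k) p = (if degree p < m then root_scale (w ^ k) p else p)"
  by (induction k)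
    (simp_all add: root_aut_def root_scale_1 degree_root_scale_less root_scale_root_scale mult.commute)

lemma nonassoc_aut_root_aut:
  assumes w: "\<sigma> w = w" "w ^ m = 1"
  shows "nonassoc_aut (Sf_carrier fpoly) (Sf_mult \<sigma> fpoly) (root_aut w)"
  unfolding nonassoc_aut_def Sf_carrier_fpoly
proof (intro conjI ballI allI impI)
  have "w \<noteq> 0" using w(2) m_pos by (metis zero_power zero_neq_one)
  then show "bij_betw (root_aut w) {p. degree p < m} {p. degree p < m}"
    by (intro bij_betw_byWitness[where f'="root_aut (inverse w)"])
      (auto simp: root_aut_def degree_root_scale_less root_scale_root_scale root_scale_1)
next
  fix x y :: "'k poly" assume x: "x \<in> {p. degree p < m}" and y: "y \<in> {p. degree p < m}"
  then have "degree (x + y) < m"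
    using degree_add_le_max[of x y] by simp
  with x y show "root_aut w (x + y) = root_aut w x + root_aut w y"
    by (simp add: root_aut_def root_scale_add)
  from x y show "root_aut w (Sf_mult \<sigma> fpoly x y) = Sf_mult \<sigma> fpoly (root_aut w x) (root_aut w y)"
    by (simp add: root_aut_def Sf_mult_eq_Sf_prod degree_root_scale_less degree_Sf_prod_less
        root_scale_Sf_prod[OF w])
qed (simp add: root_aut_def)

lemma card_range_funpow_root_aut:
  assumes w: "w ^ m = 1" "\<forall>k. 0 < k \<and> k < m \<longrightarrow> w ^ k \<noteq> 1"
  shows "card (range (\<lambda>k. root_aut w ^^ k)) = m"
proof -
  have "w \<noteq> 0" using w(1) m_pos by (metis zero_power zero_neq_one)
  have "range (\<lambda>k. root_aut w ^^ k) = (\<lambda>k. root_aut w ^^ k) ` {..<m}"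
  proof (intro subset_antisym subsetI)
    fix H assume "H \<in> range (\<lambda>k. root_aut w ^^ k)"
    then obtain k where "H = root_aut w ^^ k" by auto
    moreover have "root_aut w ^^ k = root_aut w ^^ (k mod m)"
      by (rule ext) (simp add: funpow_root_aut power_mod_period[OF w(1), of k])
    ultimately show "H \<in> (\<lambda>k. root_aut w ^^ k) ` {..<m}" using m_pos by auto
  qed auto
  moreover have "inj_on (\<lambda>k. root_aut w ^^ k) {..<m}"
  proof (rule linorder_inj_onI', rule notI)
    fix k l assume "l \<in> {..<m}" "k < l" and eq: "root_aut w ^^ k = root_aut w ^^ l"
    then have "1 < m" by simp
    then have "monom (w ^ k) 1 = monom (w ^ l) (1::nat)"
      using fun_cong[OF eq, of "monom 1 1"]
      by (simp add: funpow_root_aut degree_monom_eq root_scale_monom)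
    moreover have "w ^ k * w ^ (l - k) = w ^ l"
      using \<open>k < l\<close> by (simp flip: power_add)
    ultimately have "w ^ k * w ^ (l - k) = w ^ k * 1" by simp
    then have "w ^ (l - k) = 1" using \<open>w \<noteq> 0\<close> by simp
    with w(2) \<open>k < l\<close> \<open>l \<in> {..<m}\<close> show False by auto
  qed
  ultimately show ?thesis by (simp add: card_image)
qed

lemma Sf_const_mult: "Sf_mult \<sigma> fpoly [:a:] [:b:] = [:a * b:]"
  using Sf_mult_eq_Sf_prod[of "[:a:]" "[:b:]"] m_pos by (simp add: Sf_prod_const)

lemma Sf_const_mult_monom: "i < m \<Longrightarrow> Sf_mult \<sigma> fpoly [:a:] (monom 1 i) = monom a i"
  using Sf_mult_eq_Sf_prod[of "[:a:]" "monom 1 i"] Sf_prod_const_monom[of i a 1] m_pos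
  by (simp add: degree_monom_eq)

lemma Sf_free_module:
  "\<exists>b. (\<forall>i<m. b i \<in> Sf_carrier fpoly) \<and>
      (\<forall>x\<in>Sf_carrier fpoly. \<exists>c. (\<forall>i<m. c i \<in> range (\<lambda>a. [:a:])) \<and>
          x = (\<Sum>i<m. Sf_mult \<sigma> fpoly (c i) (b i))) \<and>
      (\<forall>c. (\<forall>i<m. c i \<in> range (\<lambda>a. [:a:])) \<and> (\<Sum>i<m. Sf_mult \<sigma> fpoly (c i) (b i)) = 0
          \<longrightarrow> (\<forall>i<m. c i = 0))"
proof (intro exI[of _ "\<lambda>i. monom 1 i"] conjI)
  show "\<forall>i<m. monom 1 i \<in> Sf_carrier fpoly"
    by (simp add: Sf_carrier_fpoly degree_monom_eq)
  show "\<forall>x\<in>Sf_carrier fpoly. \<exists>c. (\<forall>i<m. c i \<in> range (\<lambda>a. [:a:])) \<and>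
      x = (\<Sum>i<m. Sf_mult \<sigma> fpoly (c i) (monom 1 i))"
  proof
    fix x assume "x \<in> Sf_carrier fpoly"
    then have "x = (\<Sum>i<m. Sf_mult \<sigma> fpoly [:coeff x i:] (monom 1 i))"
      using poly_eq_sum_monom_coeff[of x m] by (simp add: Sf_carrier_fpoly Sf_const_mult_monom)
    then show "\<exists>c. (\<forall>i<m. c i \<in> range (\<lambda>a. [:a:])) \<and>
        x = (\<Sum>i<m. Sf_mult \<sigma> fpoly (c i) (monom 1 i))"
      by (intro exI[of _ "\<lambda>i. [:coeff x i:]"]) auto
  qed
  show "\<forall>c. (\<forall>i<m. c i \<in> range (\<lambda>a. [:a:])) \<and> (\<Sum>i<m. Sf_mult \<sigma> fpoly (c i) (monom 1 i)) = 0
      \<longrightarrow> (\<forall>i<m. c i = 0)"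
  proof (intro allI impI)
    fix c :: "nat \<Rightarrow> 'k poly" and i
    assume c: "(\<forall>i<m. c i \<in> range (\<lambda>a. [:a:])) \<and> (\<Sum>i<m. Sf_mult \<sigma> fpoly (c i) (monom 1 i)) = 0"
      and "i < m"
    then have const: "c j = [:coeff (c j) 0:]" if "j < m" for j using that by auto
    have "(\<Sum>j<m. Sf_mult \<sigma> fpoly (c j) (monom 1 j)) = (\<Sum>j<m. monom (coeff (c j) 0) j)"
      by (intro sum.cong refl, subst const) (simp_all add: Sf_const_mult_monom)
    then have "coeff (\<Sum>j<m. monom (coeff (c j) 0) j) i = 0" using c by simp
    then have "coeff (c i) 0 = 0" using \<open>i < m\<close> by (simp add: coeff_sum_monom)
    then show "c i = 0" using const[OF \<open>i < m\<close>] by simp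
  qed
qed

lemma nonassoc_cyclic_ext_Sf:
  assumes right_bij:
      "\<And>h. degree h < m \<Longrightarrow> h \<noteq> 0 \<Longrightarrow> bij_betw (\<lambda>x. Sf_prod x h) {p. degree p < m} {p. degree p < m}"
    and w: "\<sigma> w = w" "w ^ m = 1" "\<forall>k. 0 < k \<and> k < m \<longrightarrow> w ^ k \<noteq> 1"
  shows "nonassoc_cyclic_ext (Sf_carrier fpoly) (Sf_mult \<sigma> fpoly) 1 (range (\<lambda>a. [:a:])) m"
  unfolding nonassoc_cyclic_ext_def
proof (intro conjI Sf_free_module)
  let ?A = "Sf_carrier fpoly" and ?M = "Sf_mult \<sigma> fpoly" and ?D = "range (\<lambda>a::'k. [:a:])"
  show "1 \<in> ?A" "?D \<subseteq> ?A"
    using m_pos by (auto simp: Sf_carrier_fpoly)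
  then show "\<exists>x\<in>?A. x \<noteq> 0" by (intro bexI[of _ 1]) simp_all
  show "\<forall>a\<in>?A. a \<noteq> 0 \<longrightarrow> bij_betw (?M a) ?A ?A \<and> bij_betw (\<lambda>x. ?M x a) ?A ?A"
  proof (intro ballI impI conjI)
    fix a assume "a \<in> ?A" "a \<noteq> 0"
    then have a: "degree a < m" by (simp add: Sf_carrier_fpoly)
    have "bij_betw (Sf_prod a) {p. degree p < m} {p. degree p < m}"
      using bij_betw_Sf_prod_left right_bij a \<open>a \<noteq> 0\<close> by (simp add: bij_betw_def)
    then show "bij_betw (?M a) ?A ?A"
      unfolding Sf_carrier_fpoly
      by (rule bij_betw_cong[THEN iffD2, rotated]) (simp add: Sf_mult_eq_Sf_prod a)
    show "bij_betw (\<lambda>x. ?M x a) ?A ?A"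
      unfolding Sf_carrier_fpoly using right_bij[OF a \<open>a \<noteq> 0\<close>]
      by (rule bij_betw_cong[THEN iffD2, rotated]) (simp add: Sf_mult_eq_Sf_prod a)
  qed
  show "0 \<in> ?D" "1 \<in> ?D"
    by (auto simp: image_iff one_pCons)
  show "\<forall>x\<in>?D. \<forall>y\<in>?D. x + y \<in> ?D \<and> - x \<in> ?D \<and> ?M x y \<in> ?D"
    by (auto simp: Sf_const_mult image_iff intro: exI[of _ "_ + _"])
  show "\<forall>x\<in>?D. \<forall>y\<in>?D. \<forall>z\<in>?D. ?M (?M x y) z = ?M x (?M y z)"
    by (auto simp: Sf_const_mult mult.assoc)
  show "\<forall>x\<in>?D. x \<noteq> 0 \<longrightarrow> (\<exists>y\<in>?D. ?M x y = 1 \<and> ?M y x = 1)"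
  proof (intro ballI impI)
    fix x assume "x \<in> ?D" "x \<noteq> 0"
    then obtain a where "x = [:a:]" "a \<noteq> 0" by auto
    then show "\<exists>y\<in>?D. ?M x y = 1 \<and> ?M y x = 1"
      by (intro bexI[of _ "[:inverse a:]"]) (simp_all add: Sf_const_mult one_pCons)
  qed
  show "\<exists>g. nonassoc_aut ?A ?M g \<and> card (range (\<lambda>k. g ^^ k)) = m \<and>
      (\<forall>H\<in>range (\<lambda>k. g ^^ k). \<forall>x\<in>?D. H x = x)"
  proof (intro exI[of _ "root_aut w"] conjI nonassoc_aut_root_aut card_range_funpow_root_aut w)
    show "\<forall>H\<in>range (\<lambda>k. root_aut w ^^ k). \<forall>x\<in>?D. H x = x"
      using m_pos
      by (auto simp: funpow_root_aut monom_0[symmetric] root_scale_monom simp del: monom_eq_const_iff)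
  qed
qed

end

section \<open>Rings with a twisted basis \<open>t\<^sup>i\<close>\<close>

locale twisted_basis_ring =
  fixes mul :: "'a::ab_group_add \<Rightarrow> 'a \<Rightarrow> 'a"
    and one :: 'a
    and emb :: "'k::field \<Rightarrow> 'a"
    and m :: nat
    and t :: 'a
    and d :: 'k
    and \<sigma> :: "'k \<Rightarrow> 'k"
  assumes ring: "unital_nonassoc_ring mul one"
    and emb_inj: "inj emb"
    and emb_add: "\<forall>a b. emb (a + b) = emb a + emb b"
    and emb_mult: "\<forall>a b. emb (a * b) = mul (emb a) (emb b)"
    and emb_one: "emb 1 = one"
    and span: "\<forall>x. \<exists>c. x = (\<Sum>i<m. mul (emb (c i)) (tpow mul one t i))"
    and independent: "\<forall>c. (\<Sum>i<m. mul (emb (c i)) (tpow mul one t i)) = 0 \<longrightarrow> (\<forall>i<m. c i = 0)"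
    and t_commutation: "\<forall>a. a \<noteq> 0 \<longrightarrow> (\<exists>a'. a' \<noteq> 0 \<and> mul t (emb a) = mul (emb a') t)"
    and associator_basis: "\<forall>a b c i j k. i + j < m \<and> k < m \<longrightarrow>
          associator mul (mul (emb a) (tpow mul one t i)) (mul (emb b) (tpow mul one t j))
            (mul (emb c) (tpow mul one t k)) = 0"
    and d_nonzero: "d \<noteq> 0"
    and tpow_m: "tpow mul one t m = emb d"
    and sigma_def: "\<forall>a. \<sigma> a = (if a = 0 then 0
          else (SOME a'. a' \<noteq> 0 \<and> mul t (emb a) = mul (emb a') t))"
    and m_pos: "0 < m"
    and sigma_period: "\<sigma> ^^ m = id"
begin

abbreviation tp :: "nat \<Rightarrow> 'a" where
  "tp i \<equiv> tpow mul one t i"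

lemma mul_add_left: "mul (x + y) z = mul x z + mul y z"
  and mul_add_right: "mul x (y + z) = mul x y + mul x z"
  and mul_one_left [simp]: "mul one x = x"
  and mul_one_right [simp]: "mul x one = x"
  using ring by (simp_all add: unital_nonassoc_ring_def)

lemma mul_zero_left [simp]: "mul 0 x = 0"
  using mul_add_left[of 0 0 x] by simp

lemma mul_zero_right [simp]: "mul x 0 = 0"
  using mul_add_right[of x 0 0] by simp

lemma mul_diff_left: "mul (x - y) z = mul x z - mul y z"
  using mul_add_left[of "x - y" y z] by (simp add: algebra_simps)

lemma mul_sum_left: "mul (\<Sum>i\<in>A. f i) z = (\<Sum>i\<in>A. mul (f i) z)"
  by (induction A rule: infinite_finite_induct) (simp_all add: mul_add_left)

lemma mul_sum_right: "mul z (\<Sum>i\<in>A. f i) = (\<Sum>i\<in>A. mul z (f i))"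
  by (induction A rule: infinite_finite_induct) (simp_all add: mul_add_right)

lemma emb_zero [simp]: "emb 0 = 0"
  using emb_add by (metis add.right_neutral add_left_cancel)

lemma emb_diff: "emb (a - b) = emb a - emb b"
  using emb_add by (metis diff_add_cancel eq_diff_eq)

definition homogeneous :: "nat \<Rightarrow> 'a \<Rightarrow> bool" where
  "homogeneous i x \<longleftrightarrow> (\<exists>a. x = mul (emb a) (tp i))"

lemma homogeneous_emb_tp [simp]: "homogeneous i (mul (emb a) (tp i))"
  unfolding homogeneous_def by blast

lemma homogeneous_tp [simp]: "homogeneous i (tp i)"
  using homogeneous_emb_tp[of i 1] by (simp add: emb_one)

lemma homogeneous_emb [simp]: "homogeneous 0 (emb a)"
  using homogeneous_emb_tp[of 0 a] by simp

lemma homogeneous_t [simp]: "homogeneous (Suc 0) t"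
  using homogeneous_tp[of 1] by simp

lemma assoc_homogeneous:
  assumes "homogeneous i x" "homogeneous j y" "homogeneous k z" "i + j < m" "k < m"
  shows "mul (mul x y) z = mul x (mul y z)"
proof -
  obtain a b c where "x = mul (emb a) (tp i)" "y = mul (emb b) (tp j)" "z = mul (emb c) (tp k)"
    using assms(1-3) unfolding homogeneous_def by blast
  with associator_basis assms(4,5) show ?thesis unfolding associator_def by simp
qed

lemma t_mul_emb: "mul t (emb a) = mul (emb (\<sigma> a)) t"
proof (cases "a = 0")
  case False
  then have "\<exists>a'. a' \<noteq> 0 \<and> mul t (emb a) = mul (emb a') t" using t_commutation by blast
  from someI_ex[OF this] show ?thesis using sigma_def False by simp
qed (simp add: sigma_def)

lemma emb_mul_t_cancel:
  assumes eq: "mul (emb x) t = mul (emb y) t"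
  shows "x = y"
proof (cases "m = 1")
  case True
  then have "emb (x * d) = emb (y * d)" using eq tpow_m emb_mult by simp
  then show ?thesis using emb_inj d_nonzero by (simp add: inj_eq)
next
  case False
  then have "1 < m" using m_pos by simp
  define c where "c i = (if i = 1 then x - y else 0)" for i :: nat
  have "(\<Sum>i<m. mul (emb (c i)) (tp i)) = mul (emb (c 1)) (tp 1)"
    by (rule sum_eq_single) (use \<open>1 < m\<close> in \<open>auto simp: c_def\<close>)
  also have "\<dots> = 0" using eq by (simp add: c_def emb_diff mul_diff_left)
  finally have "c 1 = 0" using independent \<open>1 < m\<close> by blast
  then show ?thesis by (simp add: c_def)
qed

lemma sigma_add: "\<sigma> (x + y) = \<sigma> x + \<sigma> y"
  by (rule emb_mul_t_cancel) (simp add: t_mul_emb[symmetric] emb_add mul_add_left mul_add_right)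

lemma sigma_mult: "\<sigma> (x * y) = \<sigma> x * \<sigma> y"
proof (cases "m = 1")
  case True
  then show ?thesis using sigma_period by simp
next
  case False
  then have "1 < m" using m_pos by simp
  have "mul (emb (\<sigma> (x * y))) t = mul t (mul (emb x) (emb y))"
    by (simp add: t_mul_emb[symmetric] emb_mult)
  also have "\<dots> = mul (mul (emb (\<sigma> x)) t) (emb y)"
    using assoc_homogeneous[of 1 t 0 "emb x" 0 "emb y"] \<open>1 < m\<close> by (simp add: t_mul_emb)
  also have "\<dots> = mul (emb (\<sigma> x)) (mul (emb (\<sigma> y)) t)"
    using assoc_homogeneous[of 0 "emb (\<sigma> x)" 1 t 0 "emb y"] \<open>1 < m\<close> by (simp add: t_mul_emb)
  also have "\<dots> = mul (emb (\<sigma> x * \<sigma> y)) t"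
    using assoc_homogeneous[of 0 "emb (\<sigma> x)" 0 "emb (\<sigma> y)" 1 t] \<open>1 < m\<close> by (simp add: emb_mult)
  finally show ?thesis by (rule emb_mul_t_cancel)
qed

sublocale nonassoc_cyclic_algebra \<sigma> d m
  by unfold_locales (simp_all add: sigma_add sigma_mult sigma_period m_pos d_nonzero)

lemma tp_mul_emb: "i < m \<Longrightarrow> mul (tp i) (emb b) = mul (emb ((\<sigma> ^^ i) b)) (tp i)"
proof (induction i arbitrary: b)
  case (Suc i)
  then have "mul (tp (Suc i)) (emb b) = mul t (mul (tp i) (emb b))"
    using assoc_homogeneous[of 1 t i "tp i" 0 "emb b"] by simp
  also have "\<dots> = mul (mul t (emb ((\<sigma> ^^ i) b))) (tp i)"
    using Suc assoc_homogeneous[of 1 t 0 "emb ((\<sigma> ^^ i) b)" i "tp i"] by simp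
  also have "\<dots> = mul (emb ((\<sigma> ^^ Suc i) b)) (tp (Suc i))"
    using Suc.prems assoc_homogeneous[of 0 "emb ((\<sigma> ^^ Suc i) b)" 1 t i "tp i"] by (simp add: t_mul_emb)
  finally show ?case .
qed simp

lemma tp_mul_tp: "i < m \<Longrightarrow> j < m \<Longrightarrow> mul (tp i) (tp j) = tp (i + j)"
proof (induction i)
  case (Suc i)
  then show ?case using assoc_homogeneous[of 1 t i "tp i" j "tp j"] by simp
qed simp

lemma tp_m_plus: "r < m \<Longrightarrow> tp (m + r) = mul (emb ((\<sigma> ^^ r) d)) (tp r)"
proof (induction r)
  case 0
  then show ?case using tpow_m by simp
next
  case (Suc r)
  then have "tp (m + Suc r) = mul (mul t (emb ((\<sigma> ^^ r) d))) (tp r)"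
    using assoc_homogeneous[of 1 t 0 "emb ((\<sigma> ^^ r) d)" r "tp r"] by simp
  also have "\<dots> = mul (emb ((\<sigma> ^^ Suc r) d)) (tp (Suc r))"
    using Suc.prems assoc_homogeneous[of 0 "emb ((\<sigma> ^^ Suc r) d)" 1 t r "tp r"] by (simp add: t_mul_emb)
  finally show ?case .
qed

end

context twisted_basis_ring
begin

definition eval_t :: "'k poly \<Rightarrow> 'a" where
  "eval_t p = (\<Sum>k<m. mul (emb (coeff p k)) (tp k))"

lemma eval_t_add: "eval_t (p + q) = eval_t p + eval_t q"
  by (simp add: eval_t_def emb_add mul_add_left sum.distrib)

lemma eval_t_0 [simp]: "eval_t 0 = 0"
  by (simp add: eval_t_def)

lemma eval_t_diff: "eval_t (p - q) = eval_t p - eval_t q"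
  using eval_t_add[of "p - q" q] by (simp add: algebra_simps)

lemma eval_t_sum: "eval_t (\<Sum>k\<in>A. g k) = (\<Sum>k\<in>A. eval_t (g k))"
  by (induction A rule: infinite_finite_induct) (simp_all add: eval_t_add)

lemma eval_t_monom: "k < m \<Longrightarrow> eval_t (monom c k) = mul (emb c) (tp k)"
  unfolding eval_t_def by (subst sum_eq_single[of _ k]) (auto simp: coeff_monom)

lemma emb_mul_tp_add:
  assumes "i < m" "j < m"
  shows "mul (emb a) (tp (i + j)) = eval_t (monom_mult a i 1 j)"
proof (cases "i + j < m")
  case True
  then show ?thesis by (simp add: monom_mult_def eval_t_monom)
next
  case False
  define r where "r = i + j - m"
  have "r < m" "i + j = m + r" using False assms by (auto simp: r_def)
  then have "mul (emb a) (tp (i + j)) = mul (emb a) (mul (emb ((\<sigma> ^^ r) d)) (tp r))"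
    by (simp add: tp_m_plus)
  also have "\<dots> = mul (emb (a * (\<sigma> ^^ r) d)) (tp r)"
    using assoc_homogeneous[of 0 "emb a" 0 "emb ((\<sigma> ^^ r) d)" r "tp r"] \<open>r < m\<close>
    by (simp add: emb_mult)
  also have "\<dots> = eval_t (monom_mult a i 1 j)"
    using False \<open>r < m\<close> by (simp add: monom_mult_def eval_t_monom r_def)
  finally show ?thesis .
qed

lemma eval_t_monom_mult:
  assumes i: "i < m" and j: "j < m"
  shows "mul (mul (emb a) (tp i)) (mul (emb b) (tp j)) = eval_t (monom_mult a i b j)"
proof -
  have "mul (mul (emb a) (tp i)) (mul (emb b) (tp j)) = mul (mul (mul (emb a) (tp i)) (emb b)) (tp j)"
    using assoc_homogeneous[of i "mul (emb a) (tp i)" 0 "emb b" j "tp j"] i j by simp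
  also have "mul (mul (emb a) (tp i)) (emb b) = mul (emb (a * (\<sigma> ^^ i) b)) (tp i)"
    using assoc_homogeneous[of 0 "emb a" i "tp i" 0 "emb b"]
      assoc_homogeneous[of 0 "emb a" 0 "emb ((\<sigma> ^^ i) b)" i "tp i"] i
    by (simp add: tp_mul_emb emb_mult)
  also have "mul (mul (emb (a * (\<sigma> ^^ i) b)) (tp i)) (tp j) = mul (emb (a * (\<sigma> ^^ i) b)) (tp (i + j))"
    using assoc_homogeneous[of 0 "emb (a * (\<sigma> ^^ i) b)" i "tp i" j "tp j"] i j by (simp add: tp_mul_tp)
  also have "\<dots> = eval_t (monom_mult (a * (\<sigma> ^^ i) b) i 1 j)"
    using i j by (rule emb_mul_tp_add)
  also have "monom_mult (a * (\<sigma> ^^ i) b) i 1 j = monom_mult a i b j"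
    by (simp add: monom_mult_def)
  finally show ?thesis .
qed

lemma eval_t_Sf_prod: "eval_t (Sf_prod p q) = mul (eval_t p) (eval_t q)"
  unfolding Sf_prod_def eval_t_sum eval_t_def[of p] eval_t_def[of q]
  by (simp only: mul_sum_left, simp only: mul_sum_right, simp add: eval_t_monom_mult)

lemma bij_betw_eval_t: "bij_betw eval_t {p. degree p < m} UNIV"
proof (rule bij_betw_imageI)
  show "inj_on eval_t {p. degree p < m}"
  proof (rule inj_onI)
    fix p q :: "'k poly" assume "p \<in> {p. degree p < m}" "q \<in> {p. degree p < m}" "eval_t p = eval_t q"
    moreover have "\<forall>i<m. coeff (p - q) i = 0"
      using independent eval_t_diff[of p q] \<open>eval_t p = eval_t q\<close> unfolding eval_t_def by auto
    ultimately show "p = q" by (intro poly_eq_if_coeff_eq_below) auto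
  qed
  show "eval_t ` {p. degree p < m} = UNIV"
  proof (intro subset_antisym subsetI)
    fix x
    obtain c where "x = (\<Sum>i<m. mul (emb (c i)) (tp i))" using span by blast
    then have "x = eval_t (\<Sum>i<m. monom (c i) i)"
      by (simp add: eval_t_def coeff_sum_monom)
    then show "x \<in> eval_t ` {p. degree p < m}"
      using degree_sum_monom_less[OF m_pos] by blast
  qed simp
qed

lemma Sf_isomorphism:
  "\<exists>\<phi>. bij_betw \<phi> UNIV (Sf_carrier fpoly) \<and> (\<forall>x y. \<phi> (x + y) = \<phi> x + \<phi> y) \<and>
      (\<forall>x y. \<phi> (mul x y) = Sf_mult \<sigma> fpoly (\<phi> x) (\<phi> y))"
proof (intro exI conjI allI)
  let ?V = "{p :: 'k poly. degree p < m}" and ?\<phi> = "the_inv_into {p. degree p < m} eval_t"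
  have \<phi>: "bij_betw ?\<phi> UNIV ?V"
    by (rule bij_betw_the_inv_into[OF bij_betw_eval_t])
  then show "bij_betw ?\<phi> UNIV (Sf_carrier fpoly)"
    by (simp add: Sf_carrier_fpoly)
  have \<phi>_degree: "degree (?\<phi> z) < m" for z
    using bij_betwE[OF \<phi>] by blast
  have \<phi>_eval_t: "?\<phi> (eval_t p) = p" if "degree p < m" for p
    using the_inv_into_f_f[OF bij_betw_imp_inj_on[OF bij_betw_eval_t]] that by simp
  have eval_t_\<phi>: "eval_t (?\<phi> x) = x" for x
    using f_the_inv_into_f_bij_betw[OF bij_betw_eval_t] by simp
  fix x y
  have "?\<phi> (x + y) = ?\<phi> (eval_t (?\<phi> x + ?\<phi> y))"
    by (simp add: eval_t_add eval_t_\<phi>)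
  also have "\<dots> = ?\<phi> x + ?\<phi> y"
    using \<phi>_degree[of x] \<phi>_degree[of y] degree_add_le_max[of "?\<phi> x" "?\<phi> y"]
    by (intro \<phi>_eval_t) simp
  finally show "?\<phi> (x + y) = ?\<phi> x + ?\<phi> y" .
  have "?\<phi> (mul x y) = ?\<phi> (eval_t (Sf_prod (?\<phi> x) (?\<phi> y)))"
    by (simp add: eval_t_Sf_prod eval_t_\<phi>)
  also have "\<dots> = Sf_prod (?\<phi> x) (?\<phi> y)"
    by (rule \<phi>_eval_t[OF degree_Sf_prod_less])
  also have "\<dots> = Sf_mult \<sigma> fpoly (?\<phi> x) (?\<phi> y)"
    by (intro Sf_mult_eq_Sf_prod[symmetric] \<phi>_degree)
  finally show "?\<phi> (mul x y) = Sf_mult \<sigma> fpoly (?\<phi> x) (?\<phi> y)" .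
qed

lemma right_division_ring_imp_Sf_right_bij:
  assumes "right_division_ring mul" "degree h < m" "h \<noteq> 0"
  shows "bij_betw (\<lambda>x. Sf_prod x h) {p. degree p < m} {p. degree p < m}"
proof -
  let ?V = "{p :: 'k poly. degree p < m}"
  have eval_t_inj: "p = q" if "p \<in> ?V" "q \<in> ?V" "eval_t p = eval_t q" for p q
    using inj_onD[OF bij_betw_imp_inj_on[OF bij_betw_eval_t]] that by blast
  have "eval_t h \<noteq> 0"
    using eval_t_inj[of h 0] assms(2,3) m_pos by auto
  with assms(1) have right_mult: "bij (\<lambda>x. mul x (eval_t h))"
    by (simp add: right_division_ring_def)
  show ?thesis
  proof (rule bij_betw_imageI)
    show "inj_on (\<lambda>x. Sf_prod x h) ?V"
    proof (rule inj_onI)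
      fix x y assume "x \<in> ?V" "y \<in> ?V" "Sf_prod x h = Sf_prod y h"
      then have "mul (eval_t x) (eval_t h) = mul (eval_t y) (eval_t h)"
        by (simp flip: eval_t_Sf_prod)
      then have "eval_t x = eval_t y"
        using injD[OF bij_is_inj[OF right_mult]] by simp
      with \<open>x \<in> ?V\<close> \<open>y \<in> ?V\<close> show "x = y" by (rule eval_t_inj)
    qed
    show "(\<lambda>x. Sf_prod x h) ` ?V = ?V"
    proof (intro subset_antisym subsetI)
      fix y assume "y \<in> ?V"
      obtain z where "eval_t y = mul z (eval_t h)"
        using surjD[OF bij_is_surj[OF right_mult]] by blast
      moreover obtain x where "x \<in> ?V" "z = eval_t x"
        using bij_betw_imp_surj_on[OF bij_betw_eval_t] by blast
      ultimately have "Sf_prod x h = y"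
        using \<open>y \<in> ?V\<close> degree_Sf_prod_less by (intro eval_t_inj) (simp_all add: eval_t_Sf_prod)
      with \<open>x \<in> ?V\<close> show "y \<in> (\<lambda>x. Sf_prod x h) ` ?V" by blast
    qed (auto simp: degree_Sf_prod_less)
  qed
qed

lemma sigma_fixes_if_commutes: "mul t (emb w) = mul (emb w) t \<Longrightarrow> \<sigma> w = w"
  by (rule emb_mul_t_cancel) (simp add: t_mul_emb)

end

theorem theorem4p2:
  fixes mul :: "'a::ab_group_add \<Rightarrow> 'a \<Rightarrow> 'a"
    and one :: 'a
    and emb :: "'k::field \<Rightarrow> 'a"
    and m :: nat
    and t :: 'a
    and d :: 'k
    and \<sigma> :: "'k \<Rightarrow> 'k"
    and F :: "'k set"
  assumes ring: "unital_nonassoc_ring mul one"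
    and emb_inj: "inj emb"
    and emb_add: "\<forall>a b. emb (a + b) = emb a + emb b"
    and emb_mult: "\<forall>a b. emb (a * b) = mul (emb a) (emb b)"
    and emb_one: "emb 1 = one"
    and h1_span: "\<forall>x. \<exists>c. x = (\<Sum>i<m. mul (emb (c i)) (tpow mul one t i))"
    and h1_indep: "\<forall>c. (\<Sum>i<m. mul (emb (c i)) (tpow mul one t i)) = 0 \<longrightarrow> (\<forall>i<m. c i = 0)"
    and h2: "\<forall>a. a \<noteq> 0 \<longrightarrow> (\<exists>a'. a' \<noteq> 0 \<and> mul t (emb a) = mul (emb a') t)"
    and h3: "\<forall>a b c i j k. i + j < m \<and> k < m \<longrightarrow>
               associator mul (mul (emb a) (tpow mul one t i)) (mul (emb b) (tpow mul one t j))
                 (mul (emb c) (tpow mul one t k)) = 0"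
    and h4: "d \<noteq> 0" "tpow mul one t m = emb d"
    and sigma_def: "\<forall>a. \<sigma> a = (if a = 0 then 0
                        else (SOME a'. a' \<noteq> 0 \<and> mul t (emb a) = mul (emb a') t))"
    and sigma_order: "0 < m" "\<sigma> ^^ m = id" "\<forall>k. 0 < k \<and> k < m \<longrightarrow> \<sigma> ^^ k \<noteq> id"
    and F_def: "F = {a. mul t (emb a) = mul (emb a) t}"
    and root: "\<exists>\<omega>\<in>F. \<omega> ^ m = 1 \<and> (\<forall>k. 0 < k \<and> k < m \<longrightarrow> \<omega> ^ k \<noteq> 1)"
    and galois: "finite_cyclic_galois F"
  shows "(\<exists>\<phi>. bij_betw \<phi> UNIV (Sf_carrier (monom 1 m - [:d:])) \<and>
              (\<forall>x y. \<phi> (x + y) = \<phi> x + \<phi> y) \<and>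
              (\<forall>x y. \<phi> (mul x y) = Sf_mult \<sigma> (monom 1 m - [:d:]) (\<phi> x) (\<phi> y)))
         \<and> (right_division_ring mul \<longrightarrow>
              skew_irreducible \<sigma> (monom 1 m - [:d:]) \<and>
              nonassoc_cyclic_ext (Sf_carrier (monom 1 m - [:d:]))
                 (Sf_mult \<sigma> (monom 1 m - [:d:])) 1 (range (\<lambda>a. [:a:])) m)"
proof -
  interpret S: twisted_basis_ring mul one emb m t d \<sigma>
    using ring emb_inj emb_add emb_mult emb_one h1_span h1_indep h2 h3 h4 sigma_def sigma_order(1,2)
    by unfold_locales
  have "skew_irreducible \<sigma> S.fpoly \<and>
      nonassoc_cyclic_ext (Sf_carrier S.fpoly) (Sf_mult \<sigma> S.fpoly) 1 (range (\<lambda>a. [:a:])) m"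
    if "right_division_ring mul"
  proof
    have right_bij: "bij_betw (\<lambda>x. S.Sf_prod x h) {p. degree p < m} {p. degree p < m}"
      if "degree h < m" "h \<noteq> 0" for h
      using S.right_division_ring_imp_Sf_right_bij \<open>right_division_ring mul\<close> that by blast
    then show "skew_irreducible \<sigma> S.fpoly"
      by (intro S.skew_irreducible_fpoly bij_betw_imp_inj_on)
    obtain \<omega> where "\<omega> \<in> F" "\<omega> ^ m = 1" "\<forall>k. 0 < k \<and> k < m \<longrightarrow> \<omega> ^ k \<noteq> 1"
      using root by blast
    moreover from \<open>\<omega> \<in> F\<close> have "\<sigma> \<omega> = \<omega>"
      unfolding F_def by (intro S.sigma_fixes_if_commutes) simp
    ultimately show "nonassoc_cyclic_ext (Sf_carrier S.fpoly) (Sf_mult \<sigma> S.fpoly) 1 (range (\<lambda>a. [:a:])) m"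
      using right_bij by (intro S.nonassoc_cyclic_ext_Sf) auto
  qed
  with S.Sf_isomorphism show ?thesis by blast
qed

end
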